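(* Let $V$ be a real vector space with an inner product of signature $(p,q)$ where $p\ge2$ and $q\ge2$. Then: (1) There exists an algebraic curvature tensor $R$ on $V$ which has spacelike rank $2$ but which does not have constant timelike rank nor constant mixed rank. (2) There exists an algebraic curvature tensor $R$ on $V$ which has timelike rank $2$ but which does not have constant spacelike rank nor constant mixed rank. (3) There exists an algebraic curvature tensor $R$ on $V$ which has spacelike rank $2$ and timelike rank $2$ but which does not have constant mixed rank.
   Context: An inner product of signature $(p,q)$ is a non-degenerate symmetric bilinear form $(\cdot,\cdot)$ whose maximal negative definite subspaces have dimension $p$ and maximal positive definite subspaces dimension $q$. A $2$-plane $\pi$ is spacelike (resp. timelike, mixed) if the induced form on $\pi$ has signature $(0,2)$ (resp. $(2,0)$, $(1,1)$). An algebraic curvature tensor is $R\in\otimes^4V^*$ with $R(x,y,z,w)=R(z,w,x,y)=-R(y,x,z,w)$ and $R(x,y,z,w)+R(y,z,x,w)+R(z,x,y,w)=0$; the operator $R(x,y)$ is defined by $R(x,y,z,w)=(R(x,y)z,w)$. For a non-degenerate $2$-plane $\pi$ with oriented basis $\{e_1,e_2\}$, $R(\pi):=|(e_1,e_1)(e_2,e_2)-(e_1,e_2)^2|^{-1/2}R(e_1,e_2)$. $R$ has spacelike rank $r$ if $\operatorname{rank}R(\pi)=r$ for every oriented spacelike $2$-plane $\pi$; timelike rank $r$ and mixed rank $r$ are defined analogously using timelike, resp. mixed, $2$-planes. $R$ has constant timelike (mixed) rank if it has timelike (mixed) rank $r$ for some $r$. *)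

theory Defs
  imports "HOL-Analysis.Analysis"
begin

definition symmetric_bilinear :: "('a::real_vector \<Rightarrow> 'a \<Rightarrow> real) \<Rightarrow> bool" where
  "symmetric_bilinear B \<longleftrightarrow> (\<forall>x. linear (B x)) \<and> (\<forall>y. linear (\<lambda>x. B x y)) \<and> (\<forall>x y. B x y = B y x)"

definition neg_definite_on :: "('a::real_vector \<Rightarrow> 'a \<Rightarrow> real) \<Rightarrow> 'a set \<Rightarrow> bool" where
  "neg_definite_on B W \<longleftrightarrow> (\<forall>v\<in>W. v \<noteq> 0 \<longrightarrow> B v v < 0)"

definition pos_definite_on :: "('a::real_vector \<Rightarrow> 'a \<Rightarrow> real) \<Rightarrow> 'a set \<Rightarrow> bool" where
  "pos_definite_on B W \<longleftrightarrow> (\<forall>v\<in>W. v \<noteq> 0 \<longrightarrow> B v v > 0)"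

definition has_signature :: "('a::euclidean_space \<Rightarrow> 'a \<Rightarrow> real) \<Rightarrow> 'a set \<Rightarrow> nat \<Rightarrow> nat \<Rightarrow> bool" where
  "has_signature B S p q \<longleftrightarrow>
     subspace S \<and>
     (\<forall>v\<in>S. (\<forall>w\<in>S. B v w = 0) \<longrightarrow> v = 0) \<and>
     (\<forall>W. subspace W \<and> W \<subseteq> S \<and> neg_definite_on B W \<and>
          (\<forall>W'. subspace W' \<and> W \<subseteq> W' \<and> W' \<subseteq> S \<and> neg_definite_on B W' \<longrightarrow> W' = W)
          \<longrightarrow> dim W = p) \<and>
     (\<forall>W. subspace W \<and> W \<subseteq> S \<and> pos_definite_on B W \<and>
          (\<forall>W'. subspace W' \<and> W \<subseteq> W' \<and> W' \<subseteq> S \<and> pos_definite_on B W' \<longrightarrow> W' = W)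
          \<longrightarrow> dim W = q)"

definition inner_product_sig :: "('a::euclidean_space \<Rightarrow> 'a \<Rightarrow> real) \<Rightarrow> nat \<Rightarrow> nat \<Rightarrow> bool" where
  "inner_product_sig B p q \<longleftrightarrow> symmetric_bilinear B \<and> has_signature B UNIV p q"

definition alg_curv_tensor :: "('a::real_vector \<Rightarrow> 'a \<Rightarrow> 'a \<Rightarrow> 'a \<Rightarrow> real) \<Rightarrow> bool" where
  "alg_curv_tensor R \<longleftrightarrow>
     (\<forall>y z w. linear (\<lambda>x. R x y z w)) \<and> (\<forall>x z w. linear (\<lambda>y. R x y z w)) \<and>
     (\<forall>x y w. linear (\<lambda>z. R x y z w)) \<and> (\<forall>x y z. linear (\<lambda>w. R x y z w)) \<and>
     (\<forall>x y z w. R x y z w = R z w x y) \<and>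
     (\<forall>x y z w. R x y z w = - R y x z w) \<and>
     (\<forall>x y z w. R x y z w + R y z x w + R z x y w = 0)"

definition curv_op :: "('a \<Rightarrow> 'a \<Rightarrow> real) \<Rightarrow> ('a \<Rightarrow> 'a \<Rightarrow> 'a \<Rightarrow> 'a \<Rightarrow> real) \<Rightarrow> 'a \<Rightarrow> 'a \<Rightarrow> 'a \<Rightarrow> 'a" where
  "curv_op B R x y z = (THE u. \<forall>w. R x y z w = B u w)"

definition plane_op :: "('a::real_vector \<Rightarrow> 'a \<Rightarrow> real) \<Rightarrow> ('a \<Rightarrow> 'a \<Rightarrow> 'a \<Rightarrow> 'a \<Rightarrow> real) \<Rightarrow> 'a \<Rightarrow> 'a \<Rightarrow> 'a \<Rightarrow> 'a" where
  "plane_op B R e1 e2 z =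
     (\<bar>B e1 e1 * B e2 e2 - (B e1 e2)^2\<bar> powr (-1/2)) *\<^sub>R curv_op B R e1 e2 z"

definition op_rank :: "('a::euclidean_space \<Rightarrow> 'a) \<Rightarrow> nat" where
  "op_rank f = dim (range f)"

definition rank_on_planes :: "('a::euclidean_space \<Rightarrow> 'a \<Rightarrow> real) \<Rightarrow> nat \<Rightarrow> nat \<Rightarrow>
     ('a \<Rightarrow> 'a \<Rightarrow> 'a \<Rightarrow> 'a \<Rightarrow> real) \<Rightarrow> nat \<Rightarrow> bool" where
  "rank_on_planes B a b R r \<longleftrightarrow>
     (\<forall>e1 e2. e1 \<noteq> e2 \<and> independent {e1, e2} \<and> has_signature B (span {e1, e2}) a b
        \<longrightarrow> op_rank (plane_op B R e1 e2) = r)"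

definition spacelike_rank where "spacelike_rank B R r \<longleftrightarrow> rank_on_planes B 0 2 R r"
definition timelike_rank where "timelike_rank B R r \<longleftrightarrow> rank_on_planes B 2 0 R r"
definition mixed_rank where "mixed_rank B R r \<longleftrightarrow> rank_on_planes B 1 1 R r"

definition const_timelike_rank where "const_timelike_rank B R \<longleftrightarrow> (\<exists>r. timelike_rank B R r)"
definition const_mixed_rank where "const_mixed_rank B R \<longleftrightarrow> (\<exists>r. mixed_rank B R r)"
definition const_spacelike_rank where "const_spacelike_rank B R \<longleftrightarrow> (\<exists>r. spacelike_rank B R r)"

end

theory Submission
  imports Defs
begin

text \<open>For a nonzero vector u, the form (x, w) \<mapsto> (u \<bullet> u)(x \<bullet> w) - (x \<bullet> u)(w \<bullet> u) is
  symmetric bilinear with radical span {u}, so its canonical curvature tensor R_u is an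
  algebraic curvature tensor. Up to a nonzero factor and the isomorphism induced by B, the
  operator R_u(\<pi>) of a nondegenerate plane \<pi> = span {e1, e2} is
  z \<mapsto> (Pe2 \<bullet> z) Pe1 - (Pe1 \<bullet> z) Pe2, where P has kernel span {u}; it has rank 0 if u \<in> \<pi>
  and rank 2 otherwise. Hence R_u has rank 2 on all planes of a given type exactly when none of
  them contains u. A timelike u lies in no spacelike plane, a spacelike u in no timelike plane
  and a null u in no definite plane, while a B-orthonormal frame t1, t2, s1, s2 (which exists
  since p, q \<ge> 2) provides, for each remaining type, one plane of that type through u and one
  avoiding it.\<close>

lemma span_pair_iff: "x \<in> span {a, b} \<longleftrightarrow> (\<exists>s t. x = s *\<^sub>R a + t *\<^sub>R b)"
proof
  assume "x \<in> span {a, b}"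
  then obtain s t where "x - s *\<^sub>R a = t *\<^sub>R b" by (auto simp: span_insert span_singleton)
  then show "\<exists>s t. x = s *\<^sub>R a + t *\<^sub>R b" by (metis add.commute diff_add_cancel)
next
  assume "\<exists>s t. x = s *\<^sub>R a + t *\<^sub>R b"
  then show "x \<in> span {a, b}" by (auto intro: span_add span_mul span_base)
qed

lemma independent_pair_iff:
  fixes a b :: "'a::real_vector"
  shows "a \<noteq> b \<and> independent {a, b} \<longleftrightarrow> (\<forall>s t. s *\<^sub>R a + t *\<^sub>R b = 0 \<longrightarrow> s = 0 \<and> t = 0)"
proof
  assume "a \<noteq> b \<and> independent {a, b}"
  then have b: "b \<noteq> 0" and a: "a \<notin> span {b}"
    by (auto simp: independent_insert dependent_zero)
  show "\<forall>s t. s *\<^sub>R a + t *\<^sub>R b = 0 \<longrightarrow> s = 0 \<and> t = 0"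
  proof (intro allI impI)
    fix s t assume st: "s *\<^sub>R a + t *\<^sub>R b = 0"
    have "s = 0"
    proof (rule ccontr)
      assume "s \<noteq> 0"
      have "s *\<^sub>R a = - (t *\<^sub>R b)" using st by (simp add: eq_neg_iff_add_eq_0)
      then have "s *\<^sub>R a \<in> span {b}" by (simp add: span_base span_neg span_scale)
      then have "(1 / s) *\<^sub>R (s *\<^sub>R a) \<in> span {b}" by (rule span_scale)
      then show False using a \<open>s \<noteq> 0\<close> by simp
    qed
    then show "s = 0 \<and> t = 0" using st b by simp
  qed
next
  assume indep: "\<forall>s t. s *\<^sub>R a + t *\<^sub>R b = 0 \<longrightarrow> s = 0 \<and> t = 0"
  have "b \<noteq> 0" using indep[rule_format, of 0 1] by auto
  moreover have "a \<notin> span {b}"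
  proof
    assume "a \<in> span {b}"
    then obtain k where "a = k *\<^sub>R b" by (auto simp: span_singleton)
    then show False using indep[rule_format, of 1 "- k"] by simp
  qed
  ultimately show "a \<noteq> b \<and> independent {a, b}"
    using independent_insertI[of a "{b}"] by (auto simp: span_base)
qed

section \<open>Maximal subspaces\<close>

definition maximal_subspace :: "('a::real_vector set \<Rightarrow> bool) \<Rightarrow> 'a set \<Rightarrow> 'a set \<Rightarrow> bool" where
  "maximal_subspace P S W \<longleftrightarrow> subspace W \<and> W \<subseteq> S \<and> P W \<and>
     (\<forall>W'. subspace W' \<and> W \<subseteq> W' \<and> W' \<subseteq> S \<and> P W' \<longrightarrow> W' = W)"

lemma exists_maximal_subspace:
  fixes W0 :: "'a::euclidean_space set"
  assumes "subspace W0" "W0 \<subseteq> S" "P W0"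
  obtains W where "W0 \<subseteq> W" "maximal_subspace P S W"
proof -
  define admissible where
    "admissible k \<longleftrightarrow> (\<exists>W. subspace W \<and> W0 \<subseteq> W \<and> W \<subseteq> S \<and> P W \<and> dim W = k)" for k
  have "admissible (dim W0)" using assms unfolding admissible_def by auto
  moreover have "admissible k \<Longrightarrow> k \<le> DIM('a)" for k
    unfolding admissible_def using dim_subset_UNIV by blast
  ultimately obtain k where k: "admissible k" "\<And>k'. admissible k' \<Longrightarrow> k' \<le> k"
    using Nat.ex_has_greatest_nat[of admissible "dim W0" "DIM('a)"] by blast
  then obtain W where W: "subspace W" "W0 \<subseteq> W" "W \<subseteq> S" "P W" "dim W = k"
    unfolding admissible_def by auto
  have "W' = W" if "subspace W'" "W \<subseteq> W'" "W' \<subseteq> S" "P W'" for W'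
  proof -
    have "admissible (dim W')" unfolding admissible_def using that W by blast
    then show ?thesis using k(2) W subspace_dim_equal[of W W'] that by auto
  qed
  then show ?thesis using that W unfolding maximal_subspace_def by blast
qed

lemma dim_maximal_subspace_eq_1:
  fixes S :: "'a::euclidean_space set"
  assumes S: "subspace S" "dim S = 2" and W: "maximal_subspace P S W"
    and x: "P (span {x})" "x \<in> S" "x \<noteq> 0" and y: "y \<in> S" "y \<notin> W"
  shows "dim W = 1"
proof -
  have W': "subspace W" "W \<subseteq> S"
    and max: "\<And>W'. subspace W' \<Longrightarrow> W \<subseteq> W' \<Longrightarrow> W' \<subseteq> S \<Longrightarrow> P W' \<Longrightarrow> W' = W"
    using W unfolding maximal_subspace_def by blast+
  have "dim W \<le> 2" using dim_subset[OF W'(2)] S by simp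
  moreover have "dim W \<noteq> 2"
    using subspace_dim_equal[OF W'(1) S(1) W'(2)] S y by auto
  moreover have "dim W \<noteq> 0"
  proof
    assume "dim W = 0"
    then have "W \<subseteq> span {x}" by (auto simp: span_zero)
    moreover have "span {x} \<subseteq> S" using S x by (simp add: span_minimal)
    ultimately have "span {x} = W" using max x by blast
    then show False using \<open>dim W = 0\<close> x by (auto simp: span_base)
  qed
  ultimately show ?thesis by linarith
qed

section \<open>The curvature tensor of a degenerate inner product\<close>

definition canonical_curv :: "('a \<Rightarrow> 'a \<Rightarrow> real) \<Rightarrow> 'a \<Rightarrow> 'a \<Rightarrow> 'a \<Rightarrow> 'a \<Rightarrow> real" where
  "canonical_curv \<phi> x y z w = \<phi> y z * \<phi> x w - \<phi> x z * \<phi> y w"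

lemma alg_curv_tensor_canonical_curv:
  fixes \<phi> :: "'a::real_vector \<Rightarrow> 'a \<Rightarrow> real"
  assumes "symmetric_bilinear \<phi>"
  shows "alg_curv_tensor (canonical_curv \<phi>)"
proof -
  have bl: "bilinear \<phi>" and sym: "\<And>x y. \<phi> x y = \<phi> y x"
    using assms by (auto simp: symmetric_bilinear_def bilinear_def)
  note simps = bilinear_ladd[OF bl] bilinear_radd[OF bl] bilinear_lmul[OF bl] bilinear_rmul[OF bl]
  show ?thesis
    unfolding alg_curv_tensor_def
  proof (intro conjI allI)
    fix x y z w
    show "linear (\<lambda>x. canonical_curv \<phi> x y z w)" "linear (\<lambda>y. canonical_curv \<phi> x y z w)"
      "linear (\<lambda>z. canonical_curv \<phi> x y z w)" "linear (\<lambda>w. canonical_curv \<phi> x y z w)"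
      by (simp_all add: linear_iff canonical_curv_def simps algebra_simps)
    show "canonical_curv \<phi> x y z w = canonical_curv \<phi> z w x y"
      by (simp add: canonical_curv_def sym[of z x] sym[of w y] sym[of z y] sym[of w x])
    show "canonical_curv \<phi> x y z w = - canonical_curv \<phi> y x z w"
      by (simp add: canonical_curv_def)
    show "canonical_curv \<phi> x y z w + canonical_curv \<phi> y z x w + canonical_curv \<phi> z x y w = 0"
      by (simp add: canonical_curv_def sym[of z x] sym[of z y] sym[of y x] algebra_simps)
  qed
qed

definition wedge_op :: "'a::real_inner \<Rightarrow> 'a \<Rightarrow> 'a \<Rightarrow> 'a" where
  "wedge_op a b z = (b \<bullet> z) *\<^sub>R a - (a \<bullet> z) *\<^sub>R b"

lemma wedge_op_eq_0:
  assumes "s *\<^sub>R a + t *\<^sub>R b = 0" "s \<noteq> 0 \<or> t \<noteq> 0"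
  shows "wedge_op a b z = 0"
proof -
  have "s *\<^sub>R wedge_op a b z = wedge_op (s *\<^sub>R a + t *\<^sub>R b) b z"
    and "t *\<^sub>R wedge_op a b z = wedge_op a (s *\<^sub>R a + t *\<^sub>R b) z"
    by (simp_all add: wedge_op_def inner_add_left inner_add_right algebra_simps)
  then show ?thesis using assms by (auto simp: wedge_op_def)
qed

lemma dim_range_wedge_op:
  fixes a b :: "'a::euclidean_space"
  assumes indep: "\<And>s t. s *\<^sub>R a + t *\<^sub>R b = 0 \<Longrightarrow> s = 0 \<and> t = 0"
  shows "dim (range (wedge_op a b)) = 2"
proof -
  let ?A = "wedge_op a b" and ?g = "(a \<bullet> a) * (b \<bullet> b) - (a \<bullet> b)\<^sup>2"
  have pair: "a \<noteq> b" "independent {a, b}" using indep independent_pair_iff by blast+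
  have b: "b \<noteq> 0" using indep[of 0 1] by auto
  have sub: "subspace (range ?A)"
    by (rule linear_subspace_image[OF _ subspace_UNIV])
      (simp add: linear_iff wedge_op_def inner_add_right algebra_simps)
  have "?g \<noteq> 0" \<comment> \<open>strict Cauchy-Schwarz\<close>
  proof
    assume "?g = 0"
    have "((b \<bullet> b) *\<^sub>R a - (a \<bullet> b) *\<^sub>R b) \<bullet> ((b \<bullet> b) *\<^sub>R a - (a \<bullet> b) *\<^sub>R b) = (b \<bullet> b) * ?g"
      by (simp add: inner_diff_left inner_diff_right inner_commute power2_eq_square algebra_simps)
    then have "(b \<bullet> b) *\<^sub>R a + (- (a \<bullet> b)) *\<^sub>R b = 0" using \<open>?g = 0\<close> by simp
    then show False using indep b by fastforce
  qed
  have "?g *\<^sub>R a = (a \<bullet> a) *\<^sub>R ?A b - (a \<bullet> b) *\<^sub>R ?A a"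
    and "?g *\<^sub>R b = (a \<bullet> b) *\<^sub>R ?A b - (b \<bullet> b) *\<^sub>R ?A a"
    by (simp_all add: wedge_op_def inner_commute power2_eq_square algebra_simps)
  then have "?g *\<^sub>R a \<in> range ?A" "?g *\<^sub>R b \<in> range ?A"
    by (metis rangeI sub subspace_diff subspace_scale)+
  then have "(1 / ?g) *\<^sub>R (?g *\<^sub>R a) \<in> range ?A" "(1 / ?g) *\<^sub>R (?g *\<^sub>R b) \<in> range ?A"
    by (meson sub subspace_scale)+
  then have "a \<in> range ?A" "b \<in> range ?A" using \<open>?g \<noteq> 0\<close> by simp_all
  then have "span {a, b} \<subseteq> range ?A" using sub by (simp add: span_minimal)
  moreover have "range ?A \<subseteq> span {a, b}"
    using span_base[of a "{a, b}"] span_base[of b "{a, b}"]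
    by (auto simp: wedge_op_def intro!: span_diff span_scale)
  ultimately have "span {a, b} = range ?A" by blast
  then show ?thesis using pair by (metis dim_span_eq_card_independent card_2_iff)
qed

text \<open>(u \<bullet> u) times the orthogonal projection onto the complement of u; the factor avoids
  dividing by u \<bullet> u.\<close>

definition proj_perp :: "'a::real_inner \<Rightarrow> 'a \<Rightarrow> 'a" where
  "proj_perp u x = (u \<bullet> u) *\<^sub>R x - (x \<bullet> u) *\<^sub>R u"

lemma linear_proj_perp: "linear (proj_perp u)"
  by (simp add: linear_iff proj_perp_def inner_add_left algebra_simps)

lemma proj_perp_eq_0_iff:
  assumes "u \<noteq> 0"
  shows "proj_perp u x = 0 \<longleftrightarrow> x \<in> span {u}"
proof
  assume "proj_perp u x = 0"
  then have "(u \<bullet> u) *\<^sub>R x = (x \<bullet> u) *\<^sub>R u" by (simp add: proj_perp_def)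
  then have "(u \<bullet> u) *\<^sub>R x \<in> span {u}" by (simp add: span_base span_scale)
  then have "(1 / (u \<bullet> u)) *\<^sub>R ((u \<bullet> u) *\<^sub>R x) \<in> span {u}" by (rule span_scale)
  then show "x \<in> span {u}" using assms by simp
next
  assume "x \<in> span {u}"
  then show "proj_perp u x = 0" by (auto simp: span_singleton proj_perp_def)
qed

definition axis_curv :: "'a::real_inner \<Rightarrow> 'a \<Rightarrow> 'a \<Rightarrow> 'a \<Rightarrow> 'a \<Rightarrow> real" where
  "axis_curv u = canonical_curv (\<lambda>x w. proj_perp u x \<bullet> w)"

lemma alg_curv_tensor_axis_curv: "alg_curv_tensor (axis_curv u)"
  unfolding axis_curv_def
proof (rule alg_curv_tensor_canonical_curv)
  show "symmetric_bilinear (\<lambda>x w. proj_perp u x \<bullet> w)"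
    unfolding symmetric_bilinear_def
    using linear_proj_perp
    by (auto simp: proj_perp_def linear_iff inner_add_left inner_add_right inner_commute
        algebra_simps)
qed

lemma axis_curv_eq_wedge_op:
  "axis_curv u x y z w = w \<bullet> wedge_op (proj_perp u x) (proj_perp u y) z"
  by (simp add: axis_curv_def canonical_curv_def wedge_op_def inner_diff_right inner_commute)

lemma proj_perp_pair_dependent:
  assumes "u \<noteq> 0" "u \<in> span {e1, e2}"
  obtains s t where "s *\<^sub>R proj_perp u e1 + t *\<^sub>R proj_perp u e2 = 0" "s \<noteq> 0 \<or> t \<noteq> 0"
proof -
  obtain s t where u: "u = s *\<^sub>R e1 + t *\<^sub>R e2" using assms(2) span_pair_iff by blast
  then have st: "s \<noteq> 0 \<or> t \<noteq> 0" using assms(1) by auto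
  have "s *\<^sub>R proj_perp u e1 + t *\<^sub>R proj_perp u e2 = proj_perp u (s *\<^sub>R e1 + t *\<^sub>R e2)"
    using linear_proj_perp[of u] by (simp add: linear_add linear_scale)
  also have "\<dots> = 0" using proj_perp_eq_0_iff[OF assms(1)] by (simp add: u[symmetric] span_base)
  finally show ?thesis using that st by blast
qed

lemma proj_perp_pair_independent:
  assumes pair: "e1 \<noteq> e2" "independent {e1, e2}" and u: "u \<notin> span {e1, e2}"
    and st: "s *\<^sub>R proj_perp u e1 + t *\<^sub>R proj_perp u e2 = 0"
  shows "s = 0 \<and> t = 0"
proof -
  let ?v = "s *\<^sub>R e1 + t *\<^sub>R e2"
  have "u \<noteq> 0" using u span_zero by blast
  have "proj_perp u ?v = 0"
    using st linear_proj_perp[of u] by (simp add: linear_add linear_scale)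
  then obtain k where k: "?v = k *\<^sub>R u"
    using proj_perp_eq_0_iff[OF \<open>u \<noteq> 0\<close>] by (auto simp: span_singleton)
  have "k = 0"
  proof (rule ccontr)
    assume "k \<noteq> 0"
    then have "u = (1 / k) *\<^sub>R ?v" using k by simp
    then show False using u by (metis span_pair_iff scaleR_add_right scaleR_scaleR)
  qed
  then show ?thesis using k pair independent_pair_iff by auto
qed

section \<open>Symmetric bilinear forms and signatures\<close>

lemma has_signature_iff:
  "has_signature B S p q \<longleftrightarrow> subspace S \<and> (\<forall>v\<in>S. (\<forall>w\<in>S. B v w = 0) \<longrightarrow> v = 0) \<and>
     (\<forall>W. maximal_subspace (neg_definite_on B) S W \<longrightarrow> dim W = p) \<and>
     (\<forall>W. maximal_subspace (pos_definite_on B) S W \<longrightarrow> dim W = q)"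
  unfolding has_signature_def maximal_subspace_def by blast

lemma has_signature_uminus: "has_signature (\<lambda>x y. - B x y) S q p \<longleftrightarrow> has_signature B S p q"
  unfolding has_signature_def neg_definite_on_def pos_definite_on_def by auto

definition plane_of_signature ::
    "('a::euclidean_space \<Rightarrow> 'a \<Rightarrow> real) \<Rightarrow> nat \<Rightarrow> nat \<Rightarrow> 'a \<Rightarrow> 'a \<Rightarrow> bool" where
  "plane_of_signature B a b e1 e2 \<longleftrightarrow>
     e1 \<noteq> e2 \<and> independent {e1, e2} \<and> has_signature B (span {e1, e2}) a b"

lemma rank_on_planes_iff:
  "rank_on_planes B a b R r \<longleftrightarrow>
     (\<forall>e1 e2. plane_of_signature B a b e1 e2 \<longrightarrow> op_rank (plane_op B R e1 e2) = r)"
  unfolding rank_on_planes_def plane_of_signature_def by blast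

definition form_repr :: "('a::euclidean_space \<Rightarrow> 'a \<Rightarrow> real) \<Rightarrow> 'a \<Rightarrow> 'a" where
  "form_repr B y = (\<Sum>b\<in>Basis. B b y *\<^sub>R b)"

locale sym_form =
  fixes B :: "'a::euclidean_space \<Rightarrow> 'a \<Rightarrow> real"
  assumes symmetric_bilinear: "symmetric_bilinear B"
begin

lemma bilinear: "bilinear B"
  using symmetric_bilinear by (simp add: symmetric_bilinear_def bilinear_def)

lemma commute: "B x y = B y x"
  using symmetric_bilinear by (simp add: symmetric_bilinear_def)

lemmas form_simps =
  bilinear_ladd[OF bilinear] bilinear_radd[OF bilinear] bilinear_lsub[OF bilinear]
  bilinear_rsub[OF bilinear] bilinear_lmul[OF bilinear] bilinear_rmul[OF bilinear]
  bilinear_lneg[OF bilinear] bilinear_rneg[OF bilinear]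
  bilinear_lzero[OF bilinear] bilinear_rzero[OF bilinear]

lemma sym_form_uminus: "sym_form (\<lambda>x y. - B x y)"
  using symmetric_bilinear unfolding sym_form_def symmetric_bilinear_def
  by (auto simp: linear_compose_neg)

lemma form_zero_on_span_pair:
  assumes "B w a = 0" "B w b = 0" "x \<in> span {a, b}"
  shows "B w x = 0"
  using assms by (auto simp: span_pair_iff form_simps)

lemma not_in_span_pair:
  assumes "B w a = 0" "B w b = 0" "B w x \<noteq> 0"
  shows "x \<notin> span {a, b}"
  using form_zero_on_span_pair assms by blast

lemma neg_definite_on_span_singleton: "B v v < 0 \<Longrightarrow> neg_definite_on B (span {v})"
  by (auto simp: neg_definite_on_def span_singleton form_simps mult_less_0_iff zero_less_mult_iff)

lemma pos_definite_on_span_singleton: "B v v > 0 \<Longrightarrow> pos_definite_on B (span {v})"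
  by (auto simp: pos_definite_on_def span_singleton form_simps mult_less_0_iff zero_less_mult_iff)

lemma null_vector_orthogonal:
  assumes S: "subspace S" and psd: "\<And>w. w \<in> S \<Longrightarrow> 0 \<le> B w w"
    and v: "v \<in> S" "B v v = 0" and w: "w \<in> S"
  shows "B v w = 0"
proof (rule ccontr)
  assume vw: "B v w \<noteq> 0"
  define c where "c = B w w"
  define s where "s = - B v w / (c + 1)"
  have c: "0 \<le> c" unfolding c_def using psd w .
  then have "c + 1 \<noteq> 0" by linarith
  have "0 \<le> B (v + s *\<^sub>R w) (v + s *\<^sub>R w)"
    using S v w by (intro psd subspace_add subspace_scale)
  also have "\<dots> = 2 * s * B v w + s\<^sup>2 * c"
    using v(2) unfolding c_def
    by (simp add: form_simps commute[of w v] power2_eq_square algebra_simps)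
  also have "\<dots> = - (B v w)\<^sup>2 * (c + 2) / (c + 1)\<^sup>2"
    unfolding s_def using \<open>c + 1 \<noteq> 0\<close>
    by (simp add: power_divide divide_simps) (simp add: algebra_simps power2_eq_square)
  also have "\<dots> < 0"
    using c vw by (simp add: divide_neg_pos)
  finally show False by simp
qed

lemma nonneg_if_signature_0:
  assumes sig: "has_signature B S 0 q" and v: "v \<in> S"
  shows "0 \<le> B v v"
proof (rule ccontr)
  assume "\<not> 0 \<le> B v v"
  then have neg: "B v v < 0" by simp
  have "span {v} \<subseteq> S" using sig v by (simp add: has_signature_iff span_minimal)
  then obtain W where W: "span {v} \<subseteq> W" "maximal_subspace (neg_definite_on B) S W"
    using exists_maximal_subspace[of "span {v}" S] neg_definite_on_span_singleton[OF neg] by auto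
  then have "W \<subseteq> {0}" using sig by (simp add: has_signature_iff dim_eq_0)
  moreover have "v \<in> W" "v \<noteq> 0" using W(1) neg by (auto simp: span_base form_simps)
  ultimately show False by auto
qed

lemma pos_definite_if_signature_0:
  assumes sig: "has_signature B S 0 q"
  shows "pos_definite_on B S"
  unfolding pos_definite_on_def
proof (intro ballI impI)
  fix v assume v: "v \<in> S" "v \<noteq> 0"
  have S: "subspace S" using sig by (simp add: has_signature_iff)
  show "0 < B v v"
  proof (rule ccontr)
    assume "\<not> 0 < B v v"
    then have "B v v = 0" using nonneg_if_signature_0[OF sig v(1)] by simp
    then have "\<forall>w\<in>S. B v w = 0"
      using null_vector_orthogonal[OF S nonneg_if_signature_0[OF sig] v(1)] by blast
    then show False using sig v by (simp add: has_signature_iff)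
  qed
qed

lemma has_signature_if_pos_definite:
  assumes S: "subspace S" and pd: "pos_definite_on B S"
  shows "has_signature B S 0 (dim S)"
  unfolding has_signature_iff
proof (intro conjI allI impI ballI)
  show "subspace S" by fact
  show "v = 0" if "v \<in> S" "\<forall>w\<in>S. B v w = 0" for v
    using that pd unfolding pos_definite_on_def by fastforce
  show "dim W = 0" if "maximal_subspace (neg_definite_on B) S W" for W
  proof -
    have "W \<subseteq> {0}"
      using that pd unfolding maximal_subspace_def neg_definite_on_def pos_definite_on_def by force
    then show ?thesis by (simp add: dim_eq_0)
  qed
  show "dim W = dim S" if "maximal_subspace (pos_definite_on B) S W" for W
    using that S pd unfolding maximal_subspace_def by auto
qed

lemma gram_det_nonzero:
  assumes sig: "has_signature B (span {e1, e2}) p q" and indep: "e1 \<noteq> e2" "independent {e1, e2}"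
  shows "B e1 e1 * B e2 e2 - (B e1 e2)\<^sup>2 \<noteq> 0"
proof
  assume det: "B e1 e1 * B e2 e2 - (B e1 e2)\<^sup>2 = 0"
  obtain s t where st: "s \<noteq> 0 \<or> t \<noteq> 0" and
    radical: "B (s *\<^sub>R e1 + t *\<^sub>R e2) e1 = 0" "B (s *\<^sub>R e1 + t *\<^sub>R e2) e2 = 0"
  proof (cases "B e1 e1 = 0")
    case True
    then show ?thesis using that[of 1 0] det by (simp add: form_simps)
  next
    case False
    then show ?thesis using that[of "B e1 e2" "- B e1 e1"] det
      by (simp add: form_simps commute[of e2 e1] power2_eq_square algebra_simps)
  qed
  have "s *\<^sub>R e1 + t *\<^sub>R e2 \<in> span {e1, e2}" by (auto simp: span_pair_iff)
  then have "s *\<^sub>R e1 + t *\<^sub>R e2 = 0"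
    using sig form_zero_on_span_pair[OF radical] by (simp add: has_signature_iff)
  then show False using st indep independent_pair_iff by blast
qed

lemma independent_orthogonal_pair:
  assumes "B e1 e1 \<noteq> 0" "B e2 e2 \<noteq> 0" "B e1 e2 = 0"
  shows "e1 \<noteq> e2 \<and> independent {e1, e2}"
  unfolding independent_pair_iff
proof (intro allI impI)
  fix s t assume "s *\<^sub>R e1 + t *\<^sub>R e2 = 0"
  then have "B (s *\<^sub>R e1 + t *\<^sub>R e2) e1 = 0" "B (s *\<^sub>R e1 + t *\<^sub>R e2) e2 = 0"
    by (simp_all add: form_simps)
  then show "s = 0 \<and> t = 0" using assms by (simp add: form_simps commute[of e2 e1])
qed

lemma dim_span_orthogonal_pair:
  assumes "B e1 e1 \<noteq> 0" "B e2 e2 \<noteq> 0" "B e1 e2 = 0"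
  shows "dim (span {e1, e2}) = 2"
  using independent_orthogonal_pair[OF assms] by (simp add: dim_eq_card_independent)

lemma plane_of_signature_0_2:
  assumes "0 < B e1 e1" "0 < B e2 e2" "B e1 e2 = 0"
  shows "plane_of_signature B 0 2 e1 e2"
proof -
  have "pos_definite_on B (span {e1, e2})"
    unfolding pos_definite_on_def
  proof (intro ballI impI)
    fix v assume "v \<in> span {e1, e2}" "v \<noteq> 0"
    then obtain s t where v: "v = s *\<^sub>R e1 + t *\<^sub>R e2" "s \<noteq> 0 \<or> t \<noteq> 0"
      by (metis span_pair_iff scale_zero_left add_0)
    have "0 \<le> s\<^sup>2 * B e1 e1" "0 \<le> t\<^sup>2 * B e2 e2"
      "s \<noteq> 0 \<Longrightarrow> 0 < s\<^sup>2 * B e1 e1" "t \<noteq> 0 \<Longrightarrow> 0 < t\<^sup>2 * B e2 e2"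
      using assms by simp_all
    then have "0 < s\<^sup>2 * B e1 e1 + t\<^sup>2 * B e2 e2" using v(2) by linarith
    then show "0 < B v v"
      using assms(3) unfolding v(1)
      by (simp add: form_simps commute[of e2 e1] power2_eq_square algebra_simps)
  qed
  then show ?thesis
    using has_signature_if_pos_definite[of "span {e1, e2}"] assms
      independent_orthogonal_pair dim_span_orthogonal_pair
    unfolding plane_of_signature_def by simp
qed

lemma plane_of_signature_2_0:
  assumes "B e1 e1 < 0" "B e2 e2 < 0" "B e1 e2 = 0"
  shows "plane_of_signature B 2 0 e1 e2"
  using sym_form.plane_of_signature_0_2[OF sym_form_uminus, of e1 e2] assms
  by (simp add: plane_of_signature_def has_signature_uminus)

lemma plane_of_signature_1_1:
  assumes neg: "B e1 e1 < 0" and pos: "0 < B e2 e2" and orth: "B e1 e2 = 0"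
  shows "plane_of_signature B 1 1 e1 e2"
proof -
  let ?S = "span {e1, e2}"
  have dim: "dim ?S = 2" using dim_span_orthogonal_pair assms by simp
  have e: "e1 \<in> ?S" "e2 \<in> ?S" "e1 \<noteq> 0" "e2 \<noteq> 0"
    using neg pos by (auto simp: span_base form_simps)
  have "v = 0" if v: "v \<in> ?S" and radical: "\<forall>w\<in>?S. B v w = 0" for v
  proof -
    obtain s t where v: "v = s *\<^sub>R e1 + t *\<^sub>R e2" using v by (auto simp: span_pair_iff)
    have "B v e1 = 0" "B v e2 = 0" using radical e by auto
    then have "s = 0" "t = 0" using neg pos orth unfolding v
      by (simp_all add: form_simps commute[of e2 e1])
    then show ?thesis using v by simp
  qed
  moreover have "dim W = 1" if W: "maximal_subspace (neg_definite_on B) ?S W" for W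
  proof (rule dim_maximal_subspace_eq_1[OF subspace_span dim W
        neg_definite_on_span_singleton[OF neg] e(1) e(3) e(2)])
    show "e2 \<notin> W" using W pos e(4) unfolding maximal_subspace_def neg_definite_on_def by force
  qed
  moreover have "dim W = 1" if W: "maximal_subspace (pos_definite_on B) ?S W" for W
  proof (rule dim_maximal_subspace_eq_1[OF subspace_span dim W
        pos_definite_on_span_singleton[OF pos] e(2) e(4) e(1)])
    show "e1 \<notin> W" using W neg e(3) unfolding maximal_subspace_def pos_definite_on_def by force
  qed
  ultimately show ?thesis
    using independent_orthogonal_pair assms
      unfolding plane_of_signature_def has_signature_iff by auto
qed

lemma not_in_plane_of_signature_0_2:
  assumes "B u u \<le> 0" "u \<noteq> 0" "plane_of_signature B 0 2 e1 e2"
  shows "u \<notin> span {e1, e2}"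
  using pos_definite_if_signature_0 assms
    unfolding plane_of_signature_def pos_definite_on_def by force

lemma not_in_plane_of_signature_2_0:
  assumes "0 \<le> B u u" "u \<noteq> 0" "plane_of_signature B 2 0 e1 e2"
  shows "u \<notin> span {e1, e2}"
  using sym_form.not_in_plane_of_signature_0_2[OF sym_form_uminus, of u e1 e2] assms
  by (simp add: plane_of_signature_def has_signature_uminus)

lemma normalize_unit:
  assumes "0 < B v v"
  shows "B ((1 / sqrt (B v v)) *\<^sub>R v) ((1 / sqrt (B v v)) *\<^sub>R v) = 1"
  using assms by (simp add: form_simps)

lemma exists_orthonormal_pair:
  assumes S: "subspace S" and dim: "2 \<le> dim S" and pd: "pos_definite_on B S"
  obtains a b where "a \<in> S" "b \<in> S" "B a a = 1" "B b b = 1" "B a b = 0"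
proof -
  have "\<not> S \<subseteq> {0}" using dim by (metis dim_eq_0 not_numeral_le_zero)
  then obtain a where a: "a \<in> S" "a \<noteq> 0" by auto
  have "\<not> S \<subseteq> span {a}"
  proof
    assume "S \<subseteq> span {a}"
    then have "dim S \<le> dim {a}" by (metis dim_subset dim_span)
    also have "\<dots> \<le> 1" using dim_le_card'[of "{a}"] by simp
    finally show False using dim by simp
  qed
  then obtain b0 where b0: "b0 \<in> S" "b0 \<notin> span {a}" by auto
  define b where "b = b0 - (B a b0 / B a a) *\<^sub>R a"
  have Baa: "0 < B a a" using pd a unfolding pos_definite_on_def by blast
  have b: "b \<in> S" unfolding b_def using S a b0 by (simp add: subspace_diff subspace_scale)
  moreover have "b \<noteq> 0"
  proof
    assume "b = 0"
    then have "b0 = (B a b0 / B a a) *\<^sub>R a" unfolding b_def by simp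
    then show False using b0(2) by (metis span_base span_scale singletonI)
  qed
  ultimately have Bbb: "0 < B b b" using pd unfolding pos_definite_on_def by blast
  have Bab: "B a b = 0" unfolding b_def using Baa by (simp add: form_simps)
  show ?thesis
  proof (rule that)
    show "(1 / sqrt (B a a)) *\<^sub>R a \<in> S" "(1 / sqrt (B b b)) *\<^sub>R b \<in> S"
      using S a b by (simp_all add: subspace_scale)
    show "B ((1 / sqrt (B a a)) *\<^sub>R a) ((1 / sqrt (B b b)) *\<^sub>R b) = 0"
      using Bab by (simp add: form_simps)
    show "B ((1 / sqrt (B a a)) *\<^sub>R a) ((1 / sqrt (B a a)) *\<^sub>R a) = 1"
      using normalize_unit[OF Baa] .
    show "B ((1 / sqrt (B b b)) *\<^sub>R b) ((1 / sqrt (B b b)) *\<^sub>R b) = 1"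
      using normalize_unit[OF Bbb] .
  qed
qed

lemma inner_form_repr: "x \<bullet> form_repr B y = B x y"
proof -
  interpret linear "\<lambda>x. B x y" using bilinear by (simp add: bilinear_def)
  have "B x y = B (\<Sum>b\<in>Basis. (x \<bullet> b) *\<^sub>R b) y" by (simp add: euclidean_representation)
  also have "\<dots> = (\<Sum>b\<in>Basis. (x \<bullet> b) * B b y)" by (simp add: sum scale)
  also have "\<dots> = x \<bullet> form_repr B y" by (simp add: form_repr_def inner_sum_right mult.commute)
  finally show ?thesis by simp
qed

lemma linear_form_repr: "linear (form_repr B)"
  by (rule linearI; rule vector_eq_ldot[THEN iffD1];
      simp add: inner_form_repr inner_add_right form_simps)

lemma nonneg_on_complement_of_maximal_neg_definite:
  assumes T: "maximal_subspace (neg_definite_on B) UNIV T" and y: "\<forall>x\<in>T. B x y = 0"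
  shows "0 \<le> B y y"
proof (rule ccontr)
  assume "\<not> 0 \<le> B y y"
  then have neg: "B y y < 0" by simp
  have subT: "subspace T" and negT: "neg_definite_on B T"
    and max: "\<And>W. subspace W \<Longrightarrow> T \<subseteq> W \<Longrightarrow> neg_definite_on B W \<Longrightarrow> W = T"
    using T unfolding maximal_subspace_def by auto
  have "neg_definite_on B (span (insert y T))"
    unfolding neg_definite_on_def
  proof (intro ballI impI)
    fix z assume z: "z \<in> span (insert y T)" "z \<noteq> 0"
    then obtain k where "z - k *\<^sub>R y \<in> T"
      using subT by (metis span_breakdown_eq span_eq_iff)
    then obtain t where t: "t \<in> T" "z = t + k *\<^sub>R y" by (metis diff_add_cancel)
    have "B z z = B t t + k\<^sup>2 * B y y"
      using y t unfolding t(2)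
      by (simp add: form_simps commute[of y t] power2_eq_square algebra_simps)
    moreover have "B t t < 0 \<or> t = 0" using negT t(1) unfolding neg_definite_on_def by blast
    moreover have "k\<^sup>2 * B y y < 0 \<or> k = 0" using neg by (auto simp: mult_less_0_iff)
    moreover have "t \<noteq> 0 \<or> k \<noteq> 0" using z(2) t(2) by auto
    ultimately show "B z z < 0" by (auto simp: form_simps)
  qed
  then have "span (insert y T) = T" using max span_superset
    by (metis subspace_span subset_insertI subset_trans)
  then have "y \<in> T" by (metis insertI1 span_superset subsetD)
  then show False using y neg by auto
qed

end

section \<open>Ranks of plane operators\<close>

locale nondegenerate_form = sym_form +
  assumes nondegenerate: "\<And>v. (\<And>w. B v w = 0) \<Longrightarrow> v = 0"
begin

lemma inj_form_repr: "inj (form_repr B)"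
proof (rule linear_injective_0[OF linear_form_repr, THEN iffD2], intro allI impI)
  fix y assume "form_repr B y = 0"
  then have "B w y = 0" for w by (metis inner_form_repr inner_zero_right)
  then show "y = 0" using nondegenerate commute by metis
qed

lemma surj_form_repr: "surj (form_repr B)"
  using linear_injective_imp_surjective[OF linear_form_repr inj_form_repr] by simp

lemma dim_image_form_repr: "dim (form_repr B ` S) = dim S"
  using dim_image_eq[OF linear_form_repr] inj_form_repr by (metis inj_on_subset subset_UNIV)

lemma form_repr_curv_op:
  assumes R: "\<And>w. R x y z w = w \<bullet> a"
  shows "form_repr B (curv_op B R x y z) = a"
proof -
  obtain u where u: "form_repr B u = a" using surj_form_repr by (metis surjD)
  have Ru: "R x y z w = B u w" for w using R u inner_form_repr commute by metis
  have "curv_op B R x y z = u"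
    unfolding curv_op_def
  proof (rule the_equality)
    show "\<forall>w. R x y z w = B u w" using Ru by blast
    fix u' assume "\<forall>w. R x y z w = B u' w"
    then have "B (u' - u) w = 0" for w using Ru by (simp add: form_simps)
    then show "u' = u" using nondegenerate by fastforce
  qed
  then show ?thesis using u by simp
qed

lemma op_rank_plane_op:
  assumes det: "B e1 e1 * B e2 e2 - (B e1 e2)\<^sup>2 \<noteq> 0" and R: "\<And>z w. R e1 e2 z w = w \<bullet> A z"
  shows "op_rank (plane_op B R e1 e2) = dim (range A)"
proof -
  define c where "c = \<bar>B e1 e1 * B e2 e2 - (B e1 e2)\<^sup>2\<bar> powr (-1/2)"
  have "c \<noteq> 0" using det by (simp add: c_def)
  have "form_repr B (curv_op B R e1 e2 z) = A z" for z
    by (rule form_repr_curv_op) (rule R)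
  then have "range A = form_repr B ` range (curv_op B R e1 e2)"
    by (simp add: image_image)
  moreover have "range (plane_op B R e1 e2) = scaleR c ` range (curv_op B R e1 e2)"
    unfolding plane_op_def c_def by auto
  moreover have "dim (scaleR c ` S) = dim S" for S :: "'a set"
    using dim_image_eq[of "scaleR c" S] \<open>c \<noteq> 0\<close> by (simp add: inj_on_def)
  ultimately show ?thesis by (simp add: op_rank_def dim_image_form_repr)
qed

lemma dim_orthogonal_complement:
  assumes T: "subspace T"
  shows "dim {y. \<forall>x\<in>T. B x y = 0} + dim T = DIM('a)"
proof -
  have "{y. \<forall>x\<in>T. B x y = 0} = {y \<in> UNIV. \<forall>x \<in> form_repr B ` T. orthogonal x y}"
    by (auto simp: orthogonal_def inner_commute[of "form_repr B _"] inner_form_repr commute)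
  moreover have "subspace (form_repr B ` T)"
    using linear_subspace_image[OF linear_form_repr T] .
  ultimately show ?thesis
    using dim_subspace_orthogonal_to_vectors[of "form_repr B ` T" UNIV] dim_image_form_repr by simp
qed

lemma pos_definite_complement_of_maximal_neg_definite:
  assumes T: "maximal_subspace (neg_definite_on B) UNIV T"
  shows "pos_definite_on B {y. \<forall>x\<in>T. B x y = 0}"
proof -
  define T' where "T' = {y. \<forall>x\<in>T. B x y = 0}"
  have subT: "subspace T" and negT: "neg_definite_on B T"
    using T unfolding maximal_subspace_def by auto
  have subT': "subspace T'" unfolding T'_def subspace_def by (simp add: form_simps)
  have nonneg: "0 \<le> B y y" if "y \<in> T'" for y
    using nonneg_on_complement_of_maximal_neg_definite[OF T] that unfolding T'_def by blast
  have "T \<inter> T' \<subseteq> {0}" using negT unfolding T'_def neg_definite_on_def by force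
  then have "dim (T \<inter> T') = 0" by simp
  then have "dim {x + y |x y. x \<in> T \<and> y \<in> T'} = DIM('a)"
    using dim_sums_Int[OF subT subT'] dim_orthogonal_complement[OF subT]
      unfolding T'_def by linarith
  then have "span {x + y |x y. x \<in> T \<and> y \<in> T'} = UNIV"
    using dim_eq_full[of "{x + y |x y. x \<in> T \<and> y \<in> T'}"] by simp
  then have sum: "{x + y |x y. x \<in> T \<and> y \<in> T'} = UNIV" \<comment> \<open>so a null vector of T' is in the radical\<close>
    using span_eq_iff[THEN iffD2, OF subspace_sums[OF subT subT']] by simp
  show ?thesis
    unfolding pos_definite_on_def T'_def[symmetric]
  proof (intro ballI impI)
    fix v assume v: "v \<in> T'" "v \<noteq> 0"
    show "0 < B v v"
    proof (rule ccontr)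
      assume "\<not> 0 < B v v"
      then have null: "B v v = 0" using nonneg v(1) by force
      have "B v w = 0" for w
      proof -
        obtain x y where w: "w = x + y" "x \<in> T" "y \<in> T'" using sum by blast
        have "B v x = 0" using v(1) w(2) commute unfolding T'_def by auto
        moreover have "B v y = 0" using null_vector_orthogonal[OF subT' nonneg v(1) null w(3)] .
        ultimately show ?thesis unfolding w(1) by (simp add: form_simps)
      qed
      then show False using nondegenerate v(2) by blast
    qed
  qed
qed

lemma op_rank_axis_curv:
  assumes plane: "plane_of_signature B a b e1 e2" and u: "u \<noteq> 0"
  shows "op_rank (plane_op B (axis_curv u) e1 e2) = (if u \<in> span {e1, e2} then 0 else 2)"
proof -
  let ?A = "wedge_op (proj_perp u e1) (proj_perp u e2)"
  have "op_rank (plane_op B (axis_curv u) e1 e2) = dim (range ?A)"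
    using plane gram_det_nonzero axis_curv_eq_wedge_op
    by (intro op_rank_plane_op) (auto simp: plane_of_signature_def)
  moreover have "dim (range ?A) = 0" if uin: "u \<in> span {e1, e2}"
  proof -
    obtain s t where "s *\<^sub>R proj_perp u e1 + t *\<^sub>R proj_perp u e2 = 0" "s \<noteq> 0 \<or> t \<noteq> 0"
      using proj_perp_pair_dependent[OF u uin] .
    then have "?A z = 0" for z by (rule wedge_op_eq_0)
    then have "range ?A = {0}" by auto
    then show ?thesis by simp
  qed
  moreover have "dim (range ?A) = 2" if "u \<notin> span {e1, e2}"
    using dim_range_wedge_op proj_perp_pair_independent plane that
    unfolding plane_of_signature_def by blast
  ultimately show ?thesis by simp
qed

lemma rank_on_planes_axis_curv:
  assumes "u \<noteq> 0" and "\<And>e1 e2. plane_of_signature B a b e1 e2 \<Longrightarrow> u \<notin> span {e1, e2}"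
  shows "rank_on_planes B a b (axis_curv u) 2"
  using assms op_rank_axis_curv by (simp add: rank_on_planes_iff)

lemma not_const_rank_axis_curv:
  assumes "u \<noteq> 0"
    and "plane_of_signature B a b e1 e2" "u \<in> span {e1, e2}"
    and "plane_of_signature B a b f1 f2" "u \<notin> span {f1, f2}"
  shows "\<not> (\<exists>r. rank_on_planes B a b (axis_curv u) r)"
  using assms op_rank_axis_curv[of a b] unfolding rank_on_planes_iff by (metis zero_neq_numeral)

end

lemma nondegenerate_form_if_inner_product_sig:
  assumes "inner_product_sig B p q"
  shows "nondegenerate_form B"
  using assms unfolding inner_product_sig_def has_signature_def
  by unfold_locales auto

section \<open>Orthonormal frames\<close>

locale orthonormal_frame = nondegenerate_form +
  fixes t1 t2 s1 s2 :: "'a::euclidean_space"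
  assumes timelike: "B t1 t1 = -1" "B t2 t2 = -1"
    and spacelike: "B s1 s1 = 1" "B s2 s2 = 1"
    and orthogonal: "B t1 t2 = 0" "B s1 s2 = 0"
      "B t1 s1 = 0" "B t1 s2 = 0" "B t2 s1 = 0" "B t2 s2 = 0"

lemma (in nondegenerate_form) exists_orthonormal_frame:
  assumes sig: "has_signature B UNIV p q" and p: "2 \<le> p" and q: "2 \<le> q"
  obtains t1 t2 s1 s2 where "orthonormal_frame B t1 t2 s1 s2"
proof -
  obtain T where T: "maximal_subspace (neg_definite_on B) UNIV T"
    using exists_maximal_subspace[of "{0}" UNIV "neg_definite_on B"]
    by (auto simp: neg_definite_on_def)
  obtain W where W: "maximal_subspace (pos_definite_on B) UNIV W"
    using exists_maximal_subspace[of "{0}" UNIV "pos_definite_on B"]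
    by (auto simp: pos_definite_on_def)
  have subT: "subspace T" and subW: "subspace W" using T W unfolding maximal_subspace_def by auto
  have dims: "dim T = p" "dim W = q" using sig T W by (auto simp: has_signature_iff)
  have "T \<inter> W \<subseteq> {0}"
    using T W unfolding maximal_subspace_def neg_definite_on_def pos_definite_on_def by force
  then have "dim (T \<inter> W) = 0" by simp
  then have "p + q \<le> DIM('a)"
    using dim_sums_Int[OF subT subW] dim_subset_UNIV[of "{x + y |x y. x \<in> T \<and> y \<in> W}"] dims
    by linarith
  define T' where "T' = {y. \<forall>x\<in>T. B x y = 0}"
  have subT': "subspace T'" unfolding T'_def subspace_def by (simp add: form_simps)
  have "2 \<le> dim T'" using dim_orthogonal_complement[OF subT] dims q \<open>p + q \<le> DIM('a)\<close>
    unfolding T'_def by linarith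
  moreover have "pos_definite_on B T'"
    unfolding T'_def by (rule pos_definite_complement_of_maximal_neg_definite[OF T])
  ultimately obtain s1 s2 where s: "s1 \<in> T'" "s2 \<in> T'" "B s1 s1 = 1" "B s2 s2 = 1" "B s1 s2 = 0"
    by (rule exists_orthonormal_pair[OF subT'])
  have "2 \<le> dim T" using dims p by simp
  moreover have "pos_definite_on (\<lambda>x y. - B x y) T"
    using T unfolding maximal_subspace_def neg_definite_on_def pos_definite_on_def by auto
  ultimately obtain t1 t2 where t: "t1 \<in> T" "t2 \<in> T" "- B t1 t1 = 1" "- B t2 t2 = 1" "- B t1 t2 = 0"
    by (rule sym_form.exists_orthonormal_pair[OF sym_form_uminus subT])
  have "B t1 s1 = 0" "B t1 s2 = 0" "B t2 s1 = 0" "B t2 s2 = 0" using s t unfolding T'_def by auto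
  then have "orthonormal_frame B t1 t2 s1 s2"
    using s t by unfold_locales auto
  then show ?thesis by (rule that)
qed

context orthonormal_frame
begin

lemma orthogonal_commute:
  "B t2 t1 = 0" "B s2 s1 = 0" "B s1 t1 = 0" "B s2 t1 = 0" "B s1 t2 = 0" "B s2 t2 = 0"
  using orthogonal commute by metis+

lemmas frame_simps = timelike spacelike orthogonal orthogonal_commute

lemma axis_curv_timelike_axis:
  "spacelike_rank B (axis_curv t1) 2 \<and> \<not> const_timelike_rank B (axis_curv t1) \<and>
   \<not> const_mixed_rank B (axis_curv t1)"
proof (intro conjI)
  have t1: "t1 \<noteq> 0" using timelike by (auto simp: form_simps)
  show "spacelike_rank B (axis_curv t1) 2"
    unfolding spacelike_rank_def
    using t1 timelike by (intro rank_on_planes_axis_curv not_in_plane_of_signature_0_2) auto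
  define v where "v = 2 *\<^sub>R t1 + s1"
  have "plane_of_signature B 2 0 t1 t2" "plane_of_signature B 2 0 t2 v"
    by (auto intro!: plane_of_signature_2_0 simp: v_def form_simps frame_simps)
  moreover have "t1 \<notin> span {t2, v}"
    by (rule not_in_span_pair[of "t1 + 2 *\<^sub>R s1"]) (simp_all add: v_def form_simps frame_simps)
  ultimately show "\<not> const_timelike_rank B (axis_curv t1)"
    unfolding const_timelike_rank_def timelike_rank_def
    using not_const_rank_axis_curv[OF t1] by (simp add: span_base)
  have "plane_of_signature B 1 1 t1 s1" "plane_of_signature B 1 1 t2 s1"
    by (rule plane_of_signature_1_1; simp add: frame_simps)+
  moreover have "t1 \<notin> span {t2, s1}"
    by (rule not_in_span_pair[of t1]) (simp_all add: frame_simps)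
  ultimately show "\<not> const_mixed_rank B (axis_curv t1)"
    unfolding const_mixed_rank_def mixed_rank_def
    using not_const_rank_axis_curv[OF t1] by (simp add: span_base)
qed

lemma axis_curv_spacelike_axis:
  "timelike_rank B (axis_curv s1) 2 \<and> \<not> const_spacelike_rank B (axis_curv s1) \<and>
   \<not> const_mixed_rank B (axis_curv s1)"
proof (intro conjI)
  have s1: "s1 \<noteq> 0" using spacelike by (auto simp: form_simps)
  show "timelike_rank B (axis_curv s1) 2"
    unfolding timelike_rank_def
    using s1 spacelike by (intro rank_on_planes_axis_curv not_in_plane_of_signature_2_0) auto
  define v where "v = 2 *\<^sub>R s1 + t1"
  have "plane_of_signature B 0 2 s1 s2" "plane_of_signature B 0 2 s2 v"
    by (auto intro!: plane_of_signature_0_2 simp: v_def form_simps frame_simps)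
  moreover have "s1 \<notin> span {s2, v}"
    by (rule not_in_span_pair[of "s1 + 2 *\<^sub>R t1"]) (simp_all add: v_def form_simps frame_simps)
  ultimately show "\<not> const_spacelike_rank B (axis_curv s1)"
    unfolding const_spacelike_rank_def spacelike_rank_def
    using not_const_rank_axis_curv[OF s1] by (simp add: span_base)
  have "plane_of_signature B 1 1 t1 s1" "plane_of_signature B 1 1 t1 s2"
    by (rule plane_of_signature_1_1; simp add: frame_simps)+
  moreover have "s1 \<notin> span {t1, s2}"
    by (rule not_in_span_pair[of s1]) (simp_all add: frame_simps)
  ultimately show "\<not> const_mixed_rank B (axis_curv s1)"
    unfolding const_mixed_rank_def mixed_rank_def
    using not_const_rank_axis_curv[OF s1] by (simp add: span_base)
qed

lemma axis_curv_null_axis: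
  "spacelike_rank B (axis_curv (t1 + s1)) 2 \<and> timelike_rank B (axis_curv (t1 + s1)) 2 \<and>
   \<not> const_mixed_rank B (axis_curv (t1 + s1))"
proof (intro conjI)
  have null: "B (t1 + s1) (t1 + s1) = 0" and sep: "B t1 (t1 + s1) = -1"
    by (simp_all add: form_simps frame_simps)
  have n: "t1 + s1 \<noteq> 0"
  proof
    assume "t1 + s1 = 0"
    then show False using sep by (simp add: form_simps)
  qed
  show "spacelike_rank B (axis_curv (t1 + s1)) 2"
    unfolding spacelike_rank_def
    using n null by (intro rank_on_planes_axis_curv not_in_plane_of_signature_0_2) auto
  show "timelike_rank B (axis_curv (t1 + s1)) 2"
    unfolding timelike_rank_def
    using n null by (intro rank_on_planes_axis_curv not_in_plane_of_signature_2_0) auto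
  have "plane_of_signature B 1 1 t1 s1" "plane_of_signature B 1 1 t2 s2"
    by (rule plane_of_signature_1_1; simp add: frame_simps)+
  moreover have "t1 + s1 \<in> span {t1, s1}" by (simp add: span_add span_base)
  moreover have "t1 + s1 \<notin> span {t2, s2}"
    by (rule not_in_span_pair[of t1]) (simp_all add: sep frame_simps)
  ultimately show "\<not> const_mixed_rank B (axis_curv (t1 + s1))"
    unfolding const_mixed_rank_def mixed_rank_def
    using not_const_rank_axis_curv[OF n] by blast
qed

end

theorem lemma2p2:
  fixes B :: "real^'n \<Rightarrow> real^'n \<Rightarrow> real" and p q :: nat
  assumes "inner_product_sig B p q" and "p \<ge> 2" and "q \<ge> 2"
  shows "(\<exists>R. alg_curv_tensor R \<and> spacelike_rank B R 2 \<and>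
             \<not> const_timelike_rank B R \<and> \<not> const_mixed_rank B R)
       \<and> (\<exists>R. alg_curv_tensor R \<and> timelike_rank B R 2 \<and>
             \<not> const_spacelike_rank B R \<and> \<not> const_mixed_rank B R)
       \<and> (\<exists>R. alg_curv_tensor R \<and> spacelike_rank B R 2 \<and> timelike_rank B R 2 \<and>
             \<not> const_mixed_rank B R)"
proof -
  interpret nondegenerate_form B
    using assms(1) by (rule nondegenerate_form_if_inner_product_sig)
  have "has_signature B UNIV p q" using assms(1) by (simp add: inner_product_sig_def)
  then obtain t1 t2 s1 s2 where "orthonormal_frame B t1 t2 s1 s2"
    using exists_orthonormal_frame assms(2,3) by blast
  then interpret orthonormal_frame B t1 t2 s1 s2 .
  show ?thesis
    using alg_curv_tensor_axis_curv
      axis_curv_timelike_axis axis_curv_spacelike_axis axis_curv_null_axis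
    by blast
qed

end
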